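(* Let $\mathcal F'$ be a finite set of structures in $Rel^{cov}(\Delta,\Delta')$. Suppose there exists a finite set of structures $\mathcal D'$ such that $(\mathcal F',\mathcal D')$ is a finite duality in $Rel^{cov}(\Delta,\Delta')$. Then $\Phi(\mathrm{Forb}(\mathcal F'))=\{\Phi(\mathbf A'):\mathbf A'\in\mathrm{Forb}(\mathcal F')\}$ coincides with $CSP(\Phi(\mathcal D'))=\bigcup_{\mathbf D'\in\mathcal D'}CSP(\Phi(\mathbf D'))$. Explicitly: for every $\mathbf A\in Rel(\Delta)$ there exists $\mathbf A'\in Rel(\Delta,\Delta')$ with $\Phi(\mathbf A')=\mathbf A$ and $\mathbf F'\not\to\mathbf A'$ for every $\mathbf F'\in\mathcal F'$ if and only if $\mathbf A\to\Phi(\mathbf D')$ for some $\mathbf D'\in\mathcal D'$.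
   Context: For a finite relational signature $\Delta$, $Rel(\Delta)$ is the class of finite relational structures of signature $\Delta$ with homomorphisms (maps preserving all relations); $\mathbf A\to\mathbf B$ means there is a homomorphism. For disjoint signatures $\Delta,\Delta'$, $Rel(\Delta,\Delta')=Rel(\Delta\cup\Delta')$, and $\Phi:Rel(\Delta,\Delta')\to Rel(\Delta)$ is the forgetful functor deleting the relations of $\Delta'$ (identity on maps). $Rel^{cov}(\Delta,\Delta')$ is the class of structures in $Rel(\Delta,\Delta')$ where all relations in $\Delta'$ have a common arity $r$ and every $r$-tuple of elements belongs to some relation of $\Delta'$, with homomorphisms as morphisms. For a finite set $\mathcal F'$ in a category $\mathcal C$ of structures, $\mathrm{Forb}(\mathcal F')$ is the class of $\mathbf A'\in\mathcal C$ with $\mathbf F'\not\to\mathbf A'$ for all $\mathbf F'\in\mathcal F'$; for a finite set $\mathcal D'$, $CSP(\mathcal D')$ is the class of $\mathbf A'\in\mathcal C$ with $\mathbf A'\to\mathbf D'$ for some $\mathbf D'\in\mathcal D'$. The pair $(\mathcal F',\mathcal D')$ is a finite duality in $\mathcal C$ if $\mathrm{Forb}(\mathcal F')=CSP(\mathcal D')$ in $\mathcal C$. $\Phi(\mathcal D')=\{\Phi(\mathbf D'):\mathbf D'\in\mathcal D'\}$, and $CSP(\Phi(\mathcal D'))$ is taken in $Rel(\Delta)$. *)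

theory Defs
  imports Main
begin

text \<open>A relational structure: a universe and an interpretation of each relation
symbol as a set of tuples (lists). Symbols outside the signature are interpreted
as empty relations.\<close>

record ('a, 'r) struc =
  univ :: "'a set"
  rel  :: "'r \<Rightarrow> 'a list set"

definition is_struct :: "'r set \<Rightarrow> ('r \<Rightarrow> nat) \<Rightarrow> ('a, 'r) struc \<Rightarrow> bool" where
  "is_struct S ar A \<longleftrightarrow> finite (univ A)
     \<and> (\<forall>R\<in>S. \<forall>t\<in>rel A R. length t = ar R \<and> set t \<subseteq> univ A)
     \<and> (\<forall>R. R \<notin> S \<longrightarrow> rel A R = {})"

definition hom :: "'r set \<Rightarrow> ('a, 'r) struc \<Rightarrow> ('b, 'r) struc \<Rightarrow> ('a \<Rightarrow> 'b) \<Rightarrow> bool" where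
  "hom S A B f \<longleftrightarrow> (\<forall>x\<in>univ A. f x \<in> univ B)
     \<and> (\<forall>R\<in>S. \<forall>t\<in>rel A R. map f t \<in> rel B R)"

definition homto :: "'r set \<Rightarrow> ('a, 'r) struc \<Rightarrow> ('b, 'r) struc \<Rightarrow> bool" where
  "homto S A B \<longleftrightarrow> (\<exists>f. hom S A B f)"

text \<open>Rel^cov(Delta, Delta'): structures of signature Delta \<union> Delta', where all
relations of Delta' have the common arity r, and every r-tuple of elements lies in
some relation of Delta'.\<close>
definition is_cov :: "'r set \<Rightarrow> 'r set \<Rightarrow> ('r \<Rightarrow> nat) \<Rightarrow> nat \<Rightarrow> ('a, 'r) struc \<Rightarrow> bool" where
  "is_cov D D' ar r A \<longleftrightarrow> is_struct (D \<union> D') ar A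
     \<and> (\<forall>t. length t = r \<and> set t \<subseteq> univ A \<longrightarrow> (\<exists>R\<in>D'. t \<in> rel A R))"

definition forget :: "'r set \<Rightarrow> ('a, 'r) struc \<Rightarrow> ('a, 'r) struc" where
  "forget D A = \<lparr>univ = univ A, rel = (\<lambda>R. if R \<in> D then rel A R else {})\<rparr>"

definition Forb :: "('a, 'r) struc set \<Rightarrow> 'r set \<Rightarrow> ('b, 'r) struc set \<Rightarrow> ('a, 'r) struc set" where
  "Forb C S F = {A \<in> C. \<forall>F0\<in>F. \<not> homto S F0 A}"

definition CSP :: "('a, 'r) struc set \<Rightarrow> 'r set \<Rightarrow> ('b, 'r) struc set \<Rightarrow> ('a, 'r) struc set" where
  "CSP C S D = {A \<in> C. \<exists>D0\<in>D. homto S A D0}"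

end

theory Submission
  imports Defs
begin

text \<open>Forgetting the relations of \<open>\<Delta>'\<close> maps \<open>CSP(\<D>')\<close> onto \<open>CSP(\<Phi>(\<D>'))\<close>: a homomorphism
  \<open>f : A \<rightarrow> \<Phi>(D')\<close> lifts to \<open>A' \<rightarrow> D'\<close>, where \<open>A'\<close> extends \<open>A\<close> by pulling back the
  relations of \<open>\<Delta>'\<close> along \<open>f\<close>; \<open>A'\<close> is covering because \<open>D'\<close> is. By the duality,
  \<open>CSP(\<D>')\<close> is \<open>Forb(\<F>')\<close>.\<close>

lemma hom_mono_signature: "S \<subseteq> T \<Longrightarrow> hom T A B f \<Longrightarrow> hom S A B f"
  unfolding hom_def by blast

lemma hom_forget_iff: "hom S (forget S A) (forget S B) f \<longleftrightarrow> hom S A B f"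
  unfolding hom_def forget_def by auto

lemma is_struct_forget: "is_struct (S \<union> T) ar A \<Longrightarrow> is_struct S ar (forget S A)"
  unfolding is_struct_def forget_def by auto

lemma forget_is_struct:
  assumes "is_struct S ar A" shows "forget S A = A"
proof -
  have "(\<lambda>R. if R \<in> S then rel A R else {}) = rel A"
    using assms unfolding is_struct_def by (simp add: fun_eq_iff)
  then show ?thesis unfolding forget_def by simp
qed

definition pullback_ext ::
    "'r set \<Rightarrow> 'r set \<Rightarrow> ('r \<Rightarrow> nat) \<Rightarrow> ('a, 'r) struc \<Rightarrow> ('b, 'r) struc \<Rightarrow> ('a \<Rightarrow> 'b)
       \<Rightarrow> ('a, 'r) struc" where
  "pullback_ext S T ar A B f =
     \<lparr>univ = univ A,
      rel = (\<lambda>R. if R \<in> S then rel A R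
                 else if R \<in> T then {t. set t \<subseteq> univ A \<and> length t = ar R \<and> map f t \<in> rel B R}
                 else {})\<rparr>"

lemma forget_pullback_ext:
  assumes "is_struct S ar A" shows "forget S (pullback_ext S T ar A B f) = A"
proof -
  have "forget S (pullback_ext S T ar A B f) = forget S A"
    unfolding forget_def pullback_ext_def by (simp add: fun_eq_iff)
  with forget_is_struct[OF assms] show ?thesis by simp
qed

lemma hom_pullback_ext:
  "hom S A B f \<Longrightarrow> hom (S \<union> T) (pullback_ext S T ar A B f) B f"
  unfolding hom_def pullback_ext_def by auto

lemma is_cov_pullback_ext:
  assumes A: "is_struct S ar A" and f: "hom S A B f" and B: "is_cov S T ar r B"
    and disj: "S \<inter> T = {}" and arity: "\<forall>R\<in>T. ar R = r"
  shows "is_cov S T ar r (pullback_ext S T ar A B f)"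
  unfolding is_cov_def
proof (intro conjI allI impI)
  show "is_struct (S \<union> T) ar (pullback_ext S T ar A B f)"
    using A unfolding is_struct_def pullback_ext_def by auto
next
  fix t assume t: "length t = r \<and> set t \<subseteq> univ (pullback_ext S T ar A B f)"
  then have "length (map f t) = r \<and> set (map f t) \<subseteq> univ B"
    using f unfolding hom_def pullback_ext_def by auto
  then obtain R where "R \<in> T" "map f t \<in> rel B R"
    using B unfolding is_cov_def by blast
  with t disj arity show "\<exists>R\<in>T. t \<in> rel (pullback_ext S T ar A B f) R"
    unfolding pullback_ext_def by auto
qed

lemma forget_image_CSP_cov:
  fixes Ds :: "('b, 'r) struc set"
  assumes disj: "S \<inter> T = {}" and arity: "\<forall>R\<in>T. ar R = r"
    and Ds: "\<forall>D\<in>Ds. is_cov S T ar r D"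
  shows "forget S ` CSP {A :: ('a, 'r) struc. is_cov S T ar r A} (S \<union> T) Ds
         = CSP {A. is_struct S ar A} S (forget S ` Ds)"
proof
  show "forget S ` CSP {A :: ('a, 'r) struc. is_cov S T ar r A} (S \<union> T) Ds
        \<subseteq> CSP {A. is_struct S ar A} S (forget S ` Ds)"
    using is_struct_forget hom_mono_signature[of S "S \<union> T"] hom_forget_iff
    unfolding CSP_def homto_def is_cov_def by blast
next
  show "CSP {A. is_struct S ar A} S (forget S ` Ds)
        \<subseteq> forget S ` CSP {A :: ('a, 'r) struc. is_cov S T ar r A} (S \<union> T) Ds"
  proof
    fix A :: "('a, 'r) struc"
    assume "A \<in> CSP {A. is_struct S ar A} S (forget S ` Ds)"
    then obtain D f where A: "is_struct S ar A" and D: "D \<in> Ds"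
      and f: "hom S A (forget S D) f"
      unfolding CSP_def homto_def by auto
    from f have f': "hom S A D f"
      using hom_forget_iff[of S A D f] forget_is_struct[OF A] by simp
    let ?A' = "pullback_ext S T ar A D f"
    have "?A' \<in> CSP {A. is_cov S T ar r A} (S \<union> T) Ds"
      using is_cov_pullback_ext[OF A f' _ disj arity] hom_pullback_ext[OF f'] D Ds
      unfolding CSP_def homto_def by blast
    then show "A \<in> forget S ` CSP {A. is_cov S T ar r A} (S \<union> T) Ds"
      using forget_pullback_ext[OF A] by (metis image_eqI)
  qed
qed

theorem theorem10:
  fixes Delta Delta' :: "'r set" and ar :: "'r \<Rightarrow> nat" and r :: nat
    and F' D' :: "(nat, 'r) struc set"
  assumes "finite Delta" and "finite Delta'" and "Delta \<inter> Delta' = {}"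
    and "\<forall>R\<in>Delta'. ar R = r"
    and "finite F'" and "\<forall>F\<in>F'. is_cov Delta Delta' ar r F"
    and "finite D'" and "\<forall>D\<in>D'. is_cov Delta Delta' ar r D"
    and "Forb {A :: (nat, 'r) struc. is_cov Delta Delta' ar r A} (Delta \<union> Delta') F'
         = CSP {A :: (nat, 'r) struc. is_cov Delta Delta' ar r A} (Delta \<union> Delta') D'"
  shows "forget Delta ` Forb {A :: (nat, 'r) struc. is_cov Delta Delta' ar r A} (Delta \<union> Delta') F'
         = CSP {A :: (nat, 'r) struc. is_struct Delta ar A} Delta (forget Delta ` D')"
  using forget_image_CSP_cov[OF assms(3,4,8)] assms(9) by simp

end
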